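(* Let $K,L,N$ be positive integers and $t$ an integer with $L=K-t$, and consider a $(K,L,M,N)$ multi-antenna coded caching system with $\frac{M}{N}=\frac{t}{K}$. Then the delivery time $$T^*=\frac{K-t}{t+L}=\frac{L}{K}$$ is achievable by a scheme with subpacketization number $\frac{K}{\gcd(K,t,L)}$.
   Context: $(K,L,M,N)$ multi-antenna coded caching system: a server holds $N$ files $W_1,\dots,W_N$, each of size one unit, and has $L$ transmit antennas; it serves $K$ single-antenna users over a MISO broadcast channel of capacity one file per unit time. User $k$ has a cache of size $M$ units ($0\le M\le N$). In the placement phase (before demands are known) the server fills caches with uncoded file content. In the delivery phase each user $k$ requests a file $W_{d_k}$; the server sends vectors $\mathbf{x}(\tau)\in\mathbb{C}^L$ and user $k$ receives $y_k(\tau)=\mathbf{h}_k^T\mathbf{x}(\tau)+w_k(\tau)$ with $\mathbf{h}_k\in\mathbb{C}^L$ its channel vector; all nodes have perfect channel knowledge, the channel vectors are generic, and the high-SNR regime is considered (noise neglected). A scheme is correct if every user recovers its requested file from its cache and received signals, for every demand vector. The subpacketization number is the number of equal-size subfiles into which each file is split; if each file is split into $F$ subfiles and the delivery consists of $S'$ transmissions each of size $1/F$ file, the delivery time is $T=S'/F$. "Achievable" means such a correct scheme exists for every demand vector with that delivery time. *)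

theory Defs
  imports Complex_Main
begin

text \<open>Users are indexed by k < K, antennas by i < L, files by n < N,
subfiles of each file by j < F. A subfile is identified with the pair (n, j)
and modelled as a complex symbol (a block of symbols coded identically).
The channel of user k is h k :: nat \<Rightarrow> complex (entries i < L);
user k receives y_k = sum_i h k i * x i.\<close>

definition chan_generic :: "nat \<Rightarrow> nat \<Rightarrow> (nat \<Rightarrow> nat \<Rightarrow> complex) \<Rightarrow> bool" where
  "chan_generic K L h \<longleftrightarrow>
     (\<forall>S. S \<subseteq> {..<K} \<longrightarrow> card S \<le> L \<longrightarrow>
        (\<forall>c :: nat \<Rightarrow> complex. (\<forall>i<L. (\<Sum>k\<in>S. c k * h k i) = 0) \<longrightarrow> (\<forall>k\<in>S. c k = 0)))"

text \<open>Uncoded placement: Z k is the set of subfiles (n, j) cached by user k;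
each subfile has size 1/F, the cache size is M.\<close>
definition valid_placement :: "nat \<Rightarrow> nat \<Rightarrow> real \<Rightarrow> nat \<Rightarrow> (nat \<Rightarrow> (nat \<times> nat) set) \<Rightarrow> bool" where
  "valid_placement K N M F Z \<longleftrightarrow>
     (\<forall>k<K. Z k \<subseteq> {..<N} \<times> {..<F} \<and> real (card (Z k)) \<le> M * real F)"

text \<open>Linear delivery with S' transmissions: transmission tau is
x(tau) = sum over (n,j) of V tau (n,j) * W(n,j), with V tau (n,j) in C^L.
User k decodes each requested subfile (d k, j) not in its cache as a linear
combination of its received signals, after removing the contributions of its
cached subfiles (which it knows), for all values of the subfiles.\<close>
definition decodes :: "nat \<Rightarrow> nat \<Rightarrow> nat \<Rightarrow> nat \<Rightarrow> (nat \<Rightarrow> (nat \<times> nat) set)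
    \<Rightarrow> (nat \<Rightarrow> nat \<Rightarrow> complex) \<Rightarrow> (nat \<Rightarrow> nat) \<Rightarrow> nat
    \<Rightarrow> (nat \<Rightarrow> nat \<times> nat \<Rightarrow> nat \<Rightarrow> complex) \<Rightarrow> bool" where
  "decodes K L N F Z h d S' V \<longleftrightarrow>
     (\<forall>k<K. \<forall>j<F. (d k, j) \<notin> Z k \<longrightarrow>
        (\<exists>c :: nat \<Rightarrow> complex. \<forall>n<N. \<forall>j'<F. (n, j') \<notin> Z k \<longrightarrow>
           (\<Sum>\<tau><S'. c \<tau> * (\<Sum>i<L. h k i * V \<tau> (n, j') i))
             = (if n = d k \<and> j' = j then 1 else 0)))"

text \<open>Delivery time T is achievable with subpacketization F in the
(K,L,M,N) system: there is a placement (fixed before demands and channels)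
such that for every generic channel and every demand vector there is a
correct delivery of S' transmissions (each of size 1/F) with S'/F = T.\<close>
definition achievable_with_subpacketization ::
    "nat \<Rightarrow> nat \<Rightarrow> real \<Rightarrow> nat \<Rightarrow> nat \<Rightarrow> real \<Rightarrow> bool" where
  "achievable_with_subpacketization K L M N F T \<longleftrightarrow> F > 0 \<and>
     (\<exists>Z. valid_placement K N M F Z \<and>
        (\<forall>h. chan_generic K L h \<longrightarrow>
          (\<forall>d. (\<forall>k<K. d k < N) \<longrightarrow>
             (\<exists>S' V. real S' / real F = T \<and> decodes K L N F Z h d S' V))))"

end

theory Submission
  imports Defs "Jordan_Normal_Form.Determinant" "HOL-Number_Theory.Cong"
begin

text \<open>With g = gcd(K, t, L), split each file into a = K/g subfiles and the users into a
  groups of g. Group r caches everything except a cyclic window of b = L/g subfiles of every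
  file, which is a cache fraction (a - b)/a = t/K. A subfile is then missing at only b groups,
  i.e. at most L users, so L antennas can zero-force it onto the users requesting it while
  nulling it at all other users that lack it; everyone else subtracts it using the cache.
  Staggering the windows lets each group receive one missing subfile per transmission, so b
  transmissions of size 1/a suffice: T = b/a = L/K.\<close>

lemma square_system_solvable:
  fixes H :: "nat \<Rightarrow> nat \<Rightarrow> 'a :: field"
  assumes rows_indep: "\<And>c. \<forall>i<n. (\<Sum>p<n. c p * H p i) = 0 \<Longrightarrow> \<forall>p<n. c p = 0"
  shows "\<exists>v. \<forall>p<n. (\<Sum>i<n. H p i * v i) = y p"
proof -
  define A where "A = mat n n (\<lambda>(p, i). H p i)"
  have A: "A \<in> carrier_mat n n" unfolding A_def by simp
  have "det (transpose_mat A) \<noteq> 0"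
  proof
    assume "det (transpose_mat A) = 0"
    then obtain w where w: "w \<in> carrier_vec n" "w \<noteq> 0\<^sub>v n" "transpose_mat A *\<^sub>v w = 0\<^sub>v n"
      using det_0_iff_vec_prod_zero_field[of "transpose_mat A" n] A by auto
    have "\<forall>i<n. (\<Sum>p<n. w $ p * H p i) = 0"
    proof (intro allI impI)
      fix i assume i: "i < n"
      have "(transpose_mat A *\<^sub>v w) $ i = 0" using w(3) i by simp
      then show "(\<Sum>p<n. w $ p * H p i) = 0" using i w(1)
        by (simp add: A_def scalar_prod_def lessThan_atLeast0 mult.commute)
    qed
    then have "w = 0\<^sub>v n" using rows_indep w(1) by (intro eq_vecI) auto
    with w(2) show False by simp
  qed
  then have "det A \<noteq> 0" using det_transpose[OF A] by simp
  then obtain B where B: "B \<in> carrier_mat n n" "A * B = 1\<^sub>m n"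
    using det_non_zero_imp_unit[OF A, of "()"] by (auto simp: Units_def ring_mat_def)
  define v where "v = B *\<^sub>v vec n y"
  have "A *\<^sub>v v = (A * B) *\<^sub>v vec n y"
    unfolding v_def using assoc_mult_mat_vec[OF A B(1), of "vec n y"] by simp
  also have "\<dots> = vec n y" using B by simp
  finally have Av: "A *\<^sub>v v = vec n y" .
  show ?thesis
  proof (intro exI allI impI)
    fix p assume p: "p < n"
    have "(A *\<^sub>v v) $ p = y p" using Av p by simp
    then show "(\<Sum>i<n. H p i * v $ i) = y p"
      using p B by (simp add: A_def v_def scalar_prod_def lessThan_atLeast0)
  qed
qed

text \<open>Extending S to L users turns this into a square system with independent rows.\<close>
lemma chan_generic_zero_forcing:
  assumes gen: "chan_generic K L h" and "L \<le> K"
    and S: "S \<subseteq> {..<K}" "card S \<le> L"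
  shows "\<exists>v. \<forall>k\<in>S. (\<Sum>i<L. h k i * v i) = y k"
proof -
  obtain S' where S': "S \<subseteq> S'" "S' \<subseteq> {..<K}" "card S' = L"
    using exists_subset_between[of S L "{..<K}"] S \<open>L \<le> K\<close> by auto
  then obtain e where e: "bij_betw e {..<L} S'"
    using ex_bij_betw_nat_finite[of S'] finite_subset[of S' "{..<K}"]
    by (auto simp: lessThan_atLeast0)
  have "\<exists>v. \<forall>p<L. (\<Sum>i<L. h (e p) i * v i) = y (e p)"
  proof (rule square_system_solvable)
    fix c assume c: "\<forall>i<L. (\<Sum>p<L. c p * h (e p) i) = 0"
    define c' where "c' = c \<circ> inv_into {..<L} e"
    have "\<forall>i<L. (\<Sum>k\<in>S'. c' k * h k i) = 0"
      using c sum.reindex_bij_betw[OF e, of "\<lambda>k. c' k * h k i" for i]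
      by (simp add: c'_def bij_betw_inv_into_left[OF e])
    then have "\<forall>k\<in>S'. c' k = 0" using gen S' unfolding chan_generic_def by blast
    then show "\<forall>p<L. c p = 0"
      using bij_betw_inv_into_left[OF e] bij_betw_apply[OF e] by (metis c'_def comp_apply lessThan_iff)
  qed
  then obtain v where v: "\<forall>p<L. (\<Sum>i<L. h (e p) i * v i) = y (e p)" ..
  have "\<forall>k\<in>S'. (\<Sum>i<L. h k i * v i) = y k"
    using v bij_betw_imp_surj_on[OF e] by auto
  with S' show ?thesis by blast
qed

lemma zero_forcing_delivery:
  assumes gen: "chan_generic K L h" and "L \<le> K"
    and few_missing: "\<And>n j. n < N \<Longrightarrow> j < F \<Longrightarrow> card {k. k < K \<and> (n, j) \<notin> Z k} \<le> L"
    and slot_lt: "\<And>k j. k < K \<Longrightarrow> j < F \<Longrightarrow> (d k, j) \<notin> Z k \<Longrightarrow> slot k j < S'"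
    and slot_inj: "\<And>k. k < K \<Longrightarrow> inj_on (slot k) {j. j < F \<and> (d k, j) \<notin> Z k}"
  shows "\<exists>V. decodes K L N F Z h d S' V"
proof -
  text \<open>In transmission \<tau>, subfile (n, j) is zero-forced onto the users missing it, and
    reaches exactly those of them that request file n and are scheduled to get j at \<tau>.\<close>
  define target where "target \<tau> n j k = (if n = d k \<and> \<tau> = slot k j then 1 else (0 :: complex))"
    for \<tau> n j k
  define V where "V \<tau> = (\<lambda>(n, j). SOME v. \<forall>k\<in>{k. k < K \<and> (n, j) \<notin> Z k}.
      (\<Sum>i<L. h k i * v i) = target \<tau> n j k)" for \<tau>
  have V: "(\<Sum>i<L. h k i * V \<tau> (n, j) i) = target \<tau> n j k"
    if "n < N" "j < F" "k < K" "(n, j) \<notin> Z k" for \<tau> n j k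
  proof -
    have "\<exists>v. \<forall>k\<in>{k. k < K \<and> (n, j) \<notin> Z k}. (\<Sum>i<L. h k i * v i) = target \<tau> n j k"
      using chan_generic_zero_forcing[OF gen \<open>L \<le> K\<close> _ few_missing] that by auto
    from someI_ex[OF this] show ?thesis using that unfolding V_def by auto
  qed
  have "decodes K L N F Z h d S' V"
    unfolding decodes_def
  proof (intro allI impI)
    fix k j assume k: "k < K" and j: "j < F" and missing: "(d k, j) \<notin> Z k"
    show "\<exists>c. \<forall>n<N. \<forall>j'<F. (n, j') \<notin> Z k \<longrightarrow>
        (\<Sum>\<tau><S'. c \<tau> * (\<Sum>i<L. h k i * V \<tau> (n, j') i)) = (if n = d k \<and> j' = j then 1 else 0)"
    proof (intro exI[of _ "\<lambda>\<tau>. if \<tau> = slot k j then 1 else 0"] allI impI)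
      fix n j' assume n: "n < N" and j': "j' < F" and missing': "(n, j') \<notin> Z k"
      have "(\<Sum>\<tau><S'. (if \<tau> = slot k j then 1 else 0) * (\<Sum>i<L. h k i * V \<tau> (n, j') i))
          = (\<Sum>\<tau><S'. if \<tau> = slot k j then target \<tau> n j' k else 0)"
        using V[OF n j' k missing'] by (intro sum.cong) auto
      also have "\<dots> = target (slot k j) n j' k"
        using slot_lt[OF k j missing] by (simp add: sum.delta')
      also have "\<dots> = (if n = d k \<and> j' = j then 1 else 0)"
        using slot_inj[OF k] j j' missing missing' unfolding target_def inj_on_def by auto
      finally show "(\<Sum>\<tau><S'. (if \<tau> = slot k j then 1 else 0) * (\<Sum>i<L. h k i * V \<tau> (n, j') i))
          = (if n = d k \<and> j' = j then 1 else 0)" .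
    qed
  qed
  then show ?thesis by blast
qed

definition cyclic_offset :: "nat \<Rightarrow> nat \<Rightarrow> nat \<Rightarrow> nat" where
  "cyclic_offset a r j = (j + a - r) mod a"

lemma cyclic_offset_lt: "0 < a \<Longrightarrow> cyclic_offset a r j < a"
  by (simp add: cyclic_offset_def)

lemma cyclic_offset_cong: "r < a \<Longrightarrow> [cyclic_offset a r j + r = j] (mod a)"
  by (simp add: cyclic_offset_def cong_def mod_add_left_eq)

lemma inj_on_cyclic_offset: "r < a \<Longrightarrow> inj_on (cyclic_offset a r) {..<a}"
proof (rule inj_onI)
  fix j j' assume "r < a" "j \<in> {..<a}" "j' \<in> {..<a}" "cyclic_offset a r j = cyclic_offset a r j'"
  then have "[j = j'] (mod a)"
    using cyclic_offset_cong[of r a j] cyclic_offset_cong[of r a j'] by (metis cong_sym cong_trans)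
  with \<open>j \<in> {..<a}\<close> \<open>j' \<in> {..<a}\<close> show "j = j'" by (simp add: cong_less_modulus_unique_nat)
qed

lemma inj_on_cyclic_offset_start: "inj_on (\<lambda>r. cyclic_offset a r j) {..<a}"
proof (rule inj_onI)
  fix r r' assume "r \<in> {..<a}" "r' \<in> {..<a}" "cyclic_offset a r j = cyclic_offset a r' j"
  then have "[cyclic_offset a r j + r = cyclic_offset a r j + r'] (mod a)"
    using cyclic_offset_cong[of r a j] cyclic_offset_cong[of r' a j] by (metis cong_sym cong_trans lessThan_iff)
  then have "[r = r'] (mod a)" by (simp add: cong_add_lcancel_nat)
  with \<open>r \<in> {..<a}\<close> \<open>r' \<in> {..<a}\<close> show "r = r'" by (simp add: cong_less_modulus_unique_nat)
qed

lemma card_cyclic_offset_ge: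
  assumes "r < a"
  shows "card {j. j < a \<and> b \<le> cyclic_offset a r j} = a - b"
proof -
  let ?A = "{j. j < a \<and> b \<le> cyclic_offset a r j}"
  have onto: "cyclic_offset a r ` {..<a} = {..<a}"
    using endo_inj_surj[OF _ _ inj_on_cyclic_offset[OF assms]] cyclic_offset_lt[of a r] assms by auto
  have "cyclic_offset a r ` ?A = {b..<a}"
  proof
    show "cyclic_offset a r ` ?A \<subseteq> {b..<a}" using cyclic_offset_lt[of a r] by auto
    show "{b..<a} \<subseteq> cyclic_offset a r ` ?A"
    proof
      fix x assume x: "x \<in> {b..<a}"
      then obtain j where "j < a" "cyclic_offset a r j = x" using onto by (metis atLeastLessThan_iff imageE lessThan_iff)
      with x show "x \<in> cyclic_offset a r ` ?A" by auto
    qed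
  qed
  moreover have "inj_on (cyclic_offset a r) ?A"
    using inj_on_cyclic_offset[OF assms] by (rule inj_on_subset) auto
  ultimately show ?thesis using card_image by fastforce
qed

lemma card_users_missing_le:
  "card {k. k < g * a \<and> cyclic_offset a (k div g) j < b} \<le> g * b"
proof (cases "g = 0")
  case False
  let ?U = "{k. k < g * a \<and> cyclic_offset a (k div g) j < b}"
  have group_lt: "k div g < a" if "k < g * a" for k
    using that by (simp add: less_mult_imp_div_less mult.commute)
  have "inj_on (\<lambda>k. (cyclic_offset a (k div g) j, k mod g)) ?U"
  proof (rule inj_onI)
    fix k k' assume "k \<in> ?U" "k' \<in> ?U"
      and eq: "(cyclic_offset a (k div g) j, k mod g) = (cyclic_offset a (k' div g) j, k' mod g)"
    then have "k div g = k' div g"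
      using inj_on_cyclic_offset_start[of a j] group_lt by (auto simp: inj_on_def)
    with eq show "k = k'" by (metis div_mult_mod_eq prod.inject)
  qed
  moreover have "(\<lambda>k. (cyclic_offset a (k div g) j, k mod g)) ` ?U \<subseteq> {..<b} \<times> {..<g}"
    using False by auto
  ultimately have "card ?U \<le> card ({..<b} \<times> {..<g})"
    by (intro card_inj_on_le) auto
  then show ?thesis by (simp add: card_cartesian_product mult.commute)
qed simp

text \<open>The K = g a users form a groups of g consecutive users. Group r caches every
  subfile except the b subfiles r, r + 1, ..., r + b - 1 (mod a) of each file, and in
  transmission \<tau> < b it receives subfile r + \<tau> (mod a) of its requested file.\<close>
definition cyclic_placement :: "nat \<Rightarrow> nat \<Rightarrow> nat \<Rightarrow> nat \<Rightarrow> nat \<Rightarrow> (nat \<times> nat) set" where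
  "cyclic_placement N g a b k = {..<N} \<times> {j. j < a \<and> b \<le> cyclic_offset a (k div g) j}"

lemma valid_cyclic_placement:
  assumes "b \<le> a" and "real N * real (a - b) \<le> M * real a"
  shows "valid_placement (g * a) N M a (cyclic_placement N g a b)"
  unfolding valid_placement_def
proof (intro allI impI conjI)
  fix k assume "k < g * a"
  then have "k div g < a" by (simp add: less_mult_imp_div_less mult.commute)
  then have "card (cyclic_placement N g a b k) = N * (a - b)"
    by (simp add: cyclic_placement_def card_cartesian_product card_cyclic_offset_ge)
  with assms(2) show "real (card (cyclic_placement N g a b k)) \<le> M * real a" by simp
qed (auto simp: cyclic_placement_def)

lemma cyclic_scheme_achievable:
  assumes "0 < a" and "b \<le> a" and "real N * real (a - b) \<le> M * real a"
  shows "achievable_with_subpacketization (g * a) (g * b) M N a (real b / real a)"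
proof -
  have "\<exists>V. decodes (g * a) (g * b) N a (cyclic_placement N g a b) h d b V"
    if gen: "chan_generic (g * a) (g * b) h" and demands: "\<forall>k<g * a. d k < N" for h d
  proof (rule zero_forcing_delivery[OF gen, where slot = "\<lambda>k. cyclic_offset a (k div g)"])
    show "g * b \<le> g * a" using assms(2) by simp
    show "card {k. k < g * a \<and> (n, j) \<notin> cyclic_placement N g a b k} \<le> g * b"
      if "n < N" "j < a" for n j
      using that card_users_missing_le[of g a j b] by (simp add: cyclic_placement_def not_le)
    show "cyclic_offset a (k div g) j < b"
      if "k < g * a" "j < a" "(d k, j) \<notin> cyclic_placement N g a b k" for k j
      using that demands by (auto simp: cyclic_placement_def)
    show "inj_on (cyclic_offset a (k div g)) {j. j < a \<and> (d k, j) \<notin> cyclic_placement N g a b k}"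
      if "k < g * a" for k
      using inj_on_cyclic_offset[of "k div g" a] less_mult_imp_div_less[of k a g] that
      by (auto simp: mult.commute intro: inj_on_subset)
  qed
  then show ?thesis
    unfolding achievable_with_subpacketization_def
    using assms valid_cyclic_placement by blast
qed

theorem theorem2:
  fixes K L N :: nat and t :: int and M :: real
  assumes "K > 0" and "L > 0" and "N > 0"
    and "int L = int K - t"
    and "0 \<le> M" and "M \<le> real N"
    and "M / real N = real_of_int t / real K"
  shows "achievable_with_subpacketization K L M N
            (nat (int K div gcd (gcd (int K) t) (int L)))
            (real_of_int (int K - t) / real_of_int (t + int L))
         \<and> real_of_int (int K - t) / real_of_int (t + int L) = real L / real K"
proof -
  have "0 \<le> real_of_int t / real K" using assms(5,7) by (metis of_nat_0_le_iff divide_nonneg_nonneg)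
  then have "L \<le> K" using assms(1,4) by (simp add: zero_le_divide_iff)
  then have t: "t = int (K - L)" using assms(4) by simp
  define g where "g = gcd (gcd K (K - L)) L"
  have gcd_int: "gcd (gcd (int K) t) (int L) = int g" unfolding g_def t by simp
  have "0 < g" using assms(1) unfolding g_def by simp
  have "g dvd K" unfolding g_def using dvd_trans gcd_dvd1 by blast
  then obtain a where K: "K = g * a" ..
  have "g dvd L" unfolding g_def by simp
  then obtain b where L: "L = g * b" ..
  have "0 < a" and "b \<le> a" using assms(1) \<open>L \<le> K\<close> K L \<open>0 < g\<close> by auto
  have F: "nat (int K div gcd (gcd (int K) t) (int L)) = a"
    unfolding gcd_int using \<open>0 < g\<close> by (simp add: K flip: zdiv_int)
  have T: "real_of_int (int K - t) / real_of_int (t + int L) = real L / real K"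
  proof -
    have "int K - t = int L" and "t + int L = int K" using assms(4) by linarith+
    then show ?thesis by simp
  qed
  have "M = real N * real_of_int t / real K"
    using assms(3,7) by (simp add: field_simps)
  also have "\<dots> = real N * real (a - b) / real a"
    using \<open>0 < g\<close> by (simp add: t K L flip: diff_mult_distrib2)
  finally have "real N * real (a - b) \<le> M * real a" using \<open>0 < a\<close> by simp
  from cyclic_scheme_achievable[OF \<open>0 < a\<close> \<open>b \<le> a\<close> this]
  show ?thesis unfolding F T using K L \<open>0 < g\<close> by simp
qed

end
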